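(* Let $x_1,\dots,x_m$, $y_1,\dots,y_m$, $z_1,\dots,z_m$, $t_1,t_3$ be indeterminates and let $S_m$ act by permuting $x_1,\dots,x_m$ only. Then $$\sum_{w\in S_m}w\left(\frac{\prod_{j\ge2}(x_1-t_1y_j)\prod_{j\ge2}(z_1-t_3x_j)}{\prod_{j\ge2}(x_1-x_j)}\right)=(m-1)!\prod_{j\ge2}(z_1-t_1t_3y_j),$$ where all products run over $2\le j\le m$. *)

theory Defs
  imports "HOL-Combinatorics.Permutations"
begin

end

theory Submission
  imports Defs "HOL-Computational_Algebra.Polynomial"
begin

text \<open>
  A permutation \<open>w\<close> maps \<open>{2..m}\<close> onto \<open>{1..m} - {w 1}\<close>, so the summand depends on \<open>w\<close> only
  through \<open>b = w 1\<close>, and each \<open>b\<close> arises from \<open>(m - 1)!\<close> permutations. The remaining sum over \<open>b\<close>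
  is the Lagrange interpolation formula for \<open>p(X) = \<Prod>j. (X - t1 y j)\<close>, of degree \<open>m - 1\<close>, at the
  distinct nodes \<open>x b\<close>, evaluated in homogeneous form: \<open>\<Prod>k. (z - t x k) = t^(m-1) \<Prod>k. (z/t - x k)\<close>
  for \<open>t \<noteq> 0\<close>, while for \<open>t = 0\<close> only the leading coefficient of \<open>p\<close> matters.
\<close>

lemma lagrange_interpolation:
  fixes x :: "'b \<Rightarrow> 'a::field"
  assumes fin: "finite I" and inj: "inj_on x I" and deg: "degree p < card I"
  shows "(\<Sum>i\<in>I. smult (poly p (x i) / (\<Prod>k\<in>I-{i}. x i - x k)) (\<Prod>k\<in>I-{i}. [:-x k, 1:])) = p"
    (is "?L = p")
proof (rule poly_eqI_degree[where A = "x ` I"])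
  fix u assume "u \<in> x ` I"
  then obtain l where l: "l \<in> I" "u = x l" by auto
  have vanish: "(\<Prod>k\<in>I-{i}. x l - x k) = 0" if "i \<in> I" "i \<noteq> l" for i
    using l that fin by (intro prod_zero) auto
  have nonzero: "(\<Prod>k\<in>I-{l}. x l - x k) \<noteq> 0"
    using fin inj l by (auto simp: prod_zero_iff inj_on_def)
  have "poly ?L u = (\<Sum>i\<in>I. poly p (x i) / (\<Prod>k\<in>I-{i}. x i - x k) * (\<Prod>k\<in>I-{i}. x l - x k))"
    using l by (simp add: poly_sum poly_prod)
  also have "\<dots> = poly p (x l) / (\<Prod>k\<in>I-{l}. x l - x k) * (\<Prod>k\<in>I-{l}. x l - x k)"
    using l fin vanish by (subst sum.remove[of _ l]) (auto intro!: sum.neutral)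
  also have "\<dots> = poly p u" using nonzero l by simp
  finally show "poly ?L u = poly p u" .
next
  have "degree ?L \<le> card I - 1"
  proof (rule degree_sum_le)
    fix i assume "i \<in> I"
    then show "degree (smult (poly p (x i) / (\<Prod>k\<in>I-{i}. x i - x k)) (\<Prod>k\<in>I-{i}. [:-x k, 1:]))
        \<le> card I - 1"
      using fin by (intro order_trans[OF degree_smult_le]) (simp add: degree_prod_eq_sum_degree)
  qed (simp add: fin)
  then show "degree ?L < card (x ` I)"
    using deg card_image[OF inj] by linarith
  show "degree p < card (x ` I)"
    using deg card_image[OF inj] by simp
qed

lemma lagrange_interpolation_coeff_top:
  fixes x :: "'b \<Rightarrow> 'a::field"
  assumes fin: "finite I" and inj: "inj_on x I" and card: "card I = Suc n" and deg: "degree p \<le> n"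
  shows "(\<Sum>i\<in>I. poly p (x i) / (\<Prod>k\<in>I-{i}. x i - x k)) = coeff p n"
proof -
  have monic: "coeff (\<Prod>k\<in>I-{i}. [:-x k, 1:]) n = 1" if "i \<in> I" for i
  proof -
    have "degree (\<Prod>k\<in>I-{i}. [:-x k, 1:]) = n"
      using fin card that by (simp add: degree_prod_eq_sum_degree)
    moreover have "lead_coeff (\<Prod>k\<in>I-{i}. [:-x k, 1:]) = 1"
      by (simp add: lead_coeff_prod)
    ultimately show ?thesis by simp
  qed
  have "coeff p n = coeff (\<Sum>i\<in>I. smult (poly p (x i) / (\<Prod>k\<in>I-{i}. x i - x k))
                                         (\<Prod>k\<in>I-{i}. [:-x k, 1:])) n"
    using lagrange_interpolation[OF fin inj] card deg by simp
  also have "\<dots> = (\<Sum>i\<in>I. poly p (x i) / (\<Prod>k\<in>I-{i}. x i - x k))"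
    using monic by (simp add: coeff_sum)
  finally show ?thesis by simp
qed

lemma prod_diff_mult_eq_power_mult_prod:
  fixes t :: "'a::field"
  assumes "t \<noteq> 0"
  shows "(\<Prod>k\<in>K. z - t * x k) = t ^ card K * (\<Prod>k\<in>K. z / t - x k)"
proof (cases "finite K")
  case True
  have "(\<Prod>k\<in>K. z - t * x k) = (\<Prod>k\<in>K. t * (z / t - x k))"
    using assms by (intro prod.cong) (simp_all add: field_simps)
  also have "\<dots> = t ^ card K * (\<Prod>k\<in>K. z / t - x k)"
    using True by (simp add: prod.distrib)
  finally show ?thesis .
qed simp

lemma lagrange_interpolation_homogeneous:
  fixes x :: "'b \<Rightarrow> 'a::field" and a :: "'c \<Rightarrow> 'a"
  assumes fin: "finite I" and inj: "inj_on x I" and card: "card I = Suc n"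
    and finJ: "finite J" and cardJ: "card J = n"
  shows "(\<Sum>i\<in>I. (\<Prod>j\<in>J. x i - a j) * (\<Prod>k\<in>I-{i}. z - t * x k) / (\<Prod>k\<in>I-{i}. x i - x k))
       = (\<Prod>j\<in>J. z - t * a j)"
proof -
  define p where "p = (\<Prod>j\<in>J. [:-a j, 1:])"
  define c where "c i = (\<Prod>j\<in>J. x i - a j) / (\<Prod>k\<in>I-{i}. x i - x k)" for i
  have deg: "degree p = n"
    using finJ cardJ by (simp add: p_def degree_prod_eq_sum_degree)
  have poly_p: "poly p u = (\<Prod>j\<in>J. u - a j)" for u
    by (simp add: p_def poly_prod)
  have card_compl: "card (I - {i}) = n" if "i \<in> I" for i
    using fin card that by simp
  have "(\<Sum>i\<in>I. (\<Prod>j\<in>J. x i - a j) * (\<Prod>k\<in>I-{i}. z - t * x k) / (\<Prod>k\<in>I-{i}. x i - x k))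
      = (\<Sum>i\<in>I. c i * (\<Prod>k\<in>I-{i}. z - t * x k))"
    by (simp add: c_def field_simps)
  also have "\<dots> = (\<Prod>j\<in>J. z - t * a j)"
  proof (cases "t = 0")
    case True
    have "lead_coeff p = 1"
      by (simp add: p_def lead_coeff_prod)
    then have "coeff p n = 1"
      using deg by simp
    then have "(\<Sum>i\<in>I. c i) = 1"
      using lagrange_interpolation_coeff_top[OF fin inj card, of p] deg by (simp add: c_def poly_p)
    then show ?thesis
      using True card_compl cardJ by (simp add: sum_distrib_right[symmetric])
  next
    case False
    have "(\<Sum>i\<in>I. c i * (\<Prod>k\<in>I-{i}. z - t * x k))
        = t ^ n * (\<Sum>i\<in>I. c i * poly (\<Prod>k\<in>I-{i}. [:-x k, 1:]) (z / t))"
      using False card_compl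
      by (simp add: sum_distrib_left prod_diff_mult_eq_power_mult_prod poly_prod mult_ac cong: sum.cong)
    also have "\<dots> = t ^ n * poly p (z / t)"
    proof -
      have "(\<Sum>i\<in>I. smult (c i) (\<Prod>k\<in>I-{i}. [:-x k, 1:])) = p"
        using lagrange_interpolation[OF fin inj, of p] deg card by (simp add: c_def poly_p)
      from arg_cong[OF this, of "\<lambda>q. poly q (z / t)"] show ?thesis
        by (simp add: poly_sum)
    qed
    also have "\<dots> = (\<Prod>j\<in>J. z - t * a j)"
      using False cardJ by (simp add: poly_p prod_diff_mult_eq_power_mult_prod)
    finally show ?thesis .
  qed
  finally show ?thesis .
qed

lemma prod_comp_permutes_insert:
  assumes w: "w permutes insert a S" and a: "a \<notin> S"
  shows "(\<Prod>j\<in>S. h (w j)) = (\<Prod>k\<in>insert a S - {w a}. h k)"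
proof -
  have inj: "inj w" using w by (rule permutes_inj)
  have "w ` S = w ` (insert a S - {a})" using a by simp
  also have "\<dots> = w ` insert a S - w ` {a}"
    by (rule image_set_diff[OF inj])
  also have "\<dots> = insert a S - {w a}"
    unfolding permutes_image[OF w] by simp
  finally show ?thesis
    using prod.reindex[OF inj_on_subset[OF inj subset_UNIV, of S], of h] by simp
qed

lemma sum_permutes_apply_insert:
  assumes fin: "finite S" and a: "a \<notin> S"
  shows "(\<Sum>w | w permutes insert a S. g (w a)) = of_nat (fact (card S)) * (\<Sum>b\<in>insert a S. g b)"
proof -
  have "(\<Sum>w | w permutes insert a S. g (w a))
      = (\<Sum>b\<in>insert a S. \<Sum>q | q permutes S. g ((transpose a b \<circ> q) a))"
    by (rule sum_over_permutations_insert[OF fin a])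
  also have "\<dots> = (\<Sum>b\<in>insert a S. \<Sum>q | q permutes S. g b)"
    using a by (intro sum.cong refl) (auto simp: permutes_not_in)
  also have "\<dots> = (\<Sum>b\<in>insert a S. of_nat (fact (card S)) * g b)"
    using card_permutations[OF refl fin] by simp
  finally show ?thesis by (simp add: sum_distrib_left)
qed

theorem lemma5p7:
  fixes x y z :: "nat \<Rightarrow> 'a::field" and t1 t3 :: 'a and m :: nat
  assumes "m \<ge> 1"
    and "inj_on x {1..m}"
  shows "(\<Sum>w | w permutes {1..m}.
            (\<Prod>j\<in>{2..m}. (x (w 1) - t1 * y j)) * (\<Prod>j\<in>{2..m}. (z 1 - t3 * x (w j)))
            / (\<Prod>j\<in>{2..m}. (x (w 1) - x (w j))))
         = of_nat (fact (m - 1)) * (\<Prod>j\<in>{2..m}. (z 1 - t1 * t3 * y j))"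
proof -
  define S where "S = {2..m}"
  have I: "{1..m} = insert 1 S" and one: "(1::nat) \<notin> S" and fin: "finite S"
    and card: "card S = m - 1"
    using assms(1) by (auto simp: S_def)
  define g where "g b = (\<Prod>j\<in>S. x b - t1 * y j) * (\<Prod>k\<in>insert 1 S - {b}. z 1 - t3 * x k)
                          / (\<Prod>k\<in>insert 1 S - {b}. x b - x k)" for b
  have "(\<Sum>w | w permutes {1..m}.
            (\<Prod>j\<in>{2..m}. (x (w 1) - t1 * y j)) * (\<Prod>j\<in>{2..m}. (z 1 - t3 * x (w j)))
            / (\<Prod>j\<in>{2..m}. (x (w 1) - x (w j))))
      = (\<Sum>w | w permutes insert 1 S. g (w 1))"
    unfolding I S_def[symmetric]
  proof (intro sum.cong refl)
    fix w assume "w \<in> {w. w permutes insert 1 S}"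
    then have w: "w permutes insert 1 S" by simp
    show "(\<Prod>j\<in>S. x (w 1) - t1 * y j) * (\<Prod>j\<in>S. z 1 - t3 * x (w j)) / (\<Prod>j\<in>S. x (w 1) - x (w j))
        = g (w 1)"
      unfolding g_def prod_comp_permutes_insert[OF w one, of "\<lambda>k. z 1 - t3 * x k"]
        prod_comp_permutes_insert[OF w one, of "\<lambda>k. x (w 1) - x k"] ..
  qed
  also have "\<dots> = of_nat (fact (m - 1)) * (\<Sum>b\<in>insert 1 S. g b)"
    using sum_permutes_apply_insert[OF fin one] card by simp
  also have "(\<Sum>b\<in>insert 1 S. g b) = (\<Prod>j\<in>S. z 1 - t3 * (t1 * y j))"
    unfolding g_def
    using lagrange_interpolation_homogeneous[of "insert 1 S" x "m - 1" S "\<lambda>j. t1 * y j"]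
      fin one card assms I by simp
  finally show ?thesis by (simp add: S_def mult_ac)
qed

end
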